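(* Assume (C1)–(C3). Let $\alpha\in(0,1)$ and suppose there are $\gamma>0$, $\Gamma>0$ and $r_0\ge0$ such that $$A(x)-\Big(1-\frac{\gamma}{2}\Big)C_0(x)+B_0(x)\le-\Gamma|x|^{\gamma\alpha-\gamma+2},\qquad |x|\ge r_0,$$ and suppose further that $\gamma<2/(1-\alpha)$ and that there is $\Delta\ge1$ with $\Delta^{-1}\le C_0(x)\le\Delta$ for all $|x|\ge r_0$. Then there is $r'\ge r_0$ such that, with $I_0(r):=\int_{r'}^r\frac{\iota_0(s)}{s}ds$ for $r\ge r'$, $$\int_{r'}^\infty\Big(\int_{r'}^u e^{-I_0(v)}dv+1\Big)^\alpha\frac{e^{I_0(u)}}{\gamma_0(u)}du<\infty,$$ i.e. the integrability condition of Theorem 1.1 holds with $x_0=0$, base radius $r'$ and $\varphi(t)=t^\alpha$.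
   Context: Let $b:\mathbb{R}^d\to\mathbb{R}^d$, $\sigma:\mathbb{R}^d\to\mathbb{R}^{d\times n}$ Borel measurable, $\|M\|_{\mathrm{HS}}^2=\mathrm{Tr}\,MM^T$. (C1) for every $r>0$, $\sup_{|x|<r}(|b(x)|+\|\sigma(x)\|_{\mathrm{HS}})<\infty$; (C2) for every $r>0$ there is $\Gamma_r>0$ with $2\langle x-y,b(x)-b(y)\rangle+\|\sigma(x)-\sigma(y)\|^2_{\mathrm{HS}}\le\Gamma_r|x-y|^2$ for $|x|,|y|<r$; (C3) there is $\Gamma>0$ with $2\langle x,b(x)\rangle+\|\sigma(x)\|^2_{\mathrm{HS}}\le\Gamma(1+|x|^2)$. Notation: $c=\sigma\sigma^T$, $A(x)=\frac12\mathrm{Tr}\,c(x)$, $B_0(x)=\langle x,b(x)\rangle$, $C_0(x)=\langle x,c(x)x\rangle/|x|^2$ ($x\ne0$), $\gamma_0(r)=\inf_{|x|=r}C_0(x)$, $\iota_0(r)=\sup_{|x|=r}\frac{2A(x)-C_0(x)+2B_0(x)}{C_0(x)}$. *)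

theory Defs
  imports "HOL-Analysis.Analysis"
begin

(* Coefficients: b :: real^'d => real^'d, sigma :: real^'d => real^'n^'d (a d x n matrix,
   rows indexed by 'd, columns by 'n). *)

definition hs_norm :: "real^'n^'d \<Rightarrow> real" where
  "hs_norm M = sqrt (trace (M ** transpose M))"

definition cmat :: "(real^'d \<Rightarrow> real^'n^'d) \<Rightarrow> real^'d \<Rightarrow> real^'d^'d" where
  "cmat \<sigma> x = \<sigma> x ** transpose (\<sigma> x)"

definition Acoef :: "(real^'d \<Rightarrow> real^'n^'d) \<Rightarrow> real^'d \<Rightarrow> real" where
  "Acoef \<sigma> x = trace (cmat \<sigma> x) / 2"

definition B0 :: "(real^'d \<Rightarrow> real^'d) \<Rightarrow> real^'d \<Rightarrow> real" where
  "B0 b x = x \<bullet> b x"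

(* only meaningful for x \<noteq> 0 *)
definition C0 :: "(real^'d \<Rightarrow> real^'n^'d) \<Rightarrow> real^'d \<Rightarrow> real" where
  "C0 \<sigma> x = (x \<bullet> (cmat \<sigma> x *v x)) / (norm x)^2"

definition gamma0 :: "(real^'d \<Rightarrow> real^'n^'d) \<Rightarrow> real \<Rightarrow> real" where
  "gamma0 \<sigma> r = (INF x\<in>{x. norm x = r}. C0 \<sigma> x)"

definition iota0 :: "(real^'d \<Rightarrow> real^'d) \<Rightarrow> (real^'d \<Rightarrow> real^'n^'d) \<Rightarrow> real \<Rightarrow> real" where
  "iota0 b \<sigma> r = (SUP x\<in>{x. norm x = r}.
      (2 * Acoef \<sigma> x - C0 \<sigma> x + 2 * B0 b x) / C0 \<sigma> x)"

end

theory Submission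
  imports Defs "HOL-Real_Asymp.Real_Asymp"
begin

text \<open>Write \<open>p = \<gamma>\<alpha> - \<gamma> + 2\<close>, which is positive exactly because \<open>\<gamma> < 2/(1 - \<alpha>)\<close>.
  Dividing the drift condition by \<open>C0 \<le> \<Delta>\<close> gives \<open>iota0 s \<le> (1 - \<gamma>) - 2\<Gamma> s^p / \<Delta>\<close>, so
  \<open>iota0 s / s \<le> -K s^(p-1)\<close> beyond some radius \<open>r'\<close>. Hence \<open>I0\<close> is decreasing with
  \<open>I0 u \<le> -(K/p)(u^p - r'^p)\<close>, the inner integral \<open>\<integral>[r',u] exp (-I0)\<close> is at most
  \<open>(u - r') exp (-I0 u)\<close>, and the integrand is bounded by \<open>\<Delta> (u - r' + 1)^\<alpha> exp ((1 - \<alpha>) I0 u)\<close>,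
  which decays like a stretched exponential.

  The real work is measurability of \<open>iota0\<close> and \<open>gamma0\<close>, a supremum and an infimum over spheres.
  (C1) and (C2) make \<open>\<sigma>\<close> continuous and \<open>b\<close> one-sided Lipschitz along rays, which makes \<open>iota0\<close>
  lower and \<open>gamma0\<close> upper semicontinuous from the left; a superlevel set of such a function contains
  a left neighbourhood of each of its points, and such sets are Borel.\<close>

lemma trace_mult_transpose_self:
  fixes M :: "real^'n^'d"
  shows "trace (M ** transpose M) = (\<Sum>i\<in>UNIV. \<Sum>j\<in>UNIV. (M$i$j)^2)"
  by (simp add: trace_def matrix_matrix_mult_def transpose_def power2_eq_square)

lemma hs_norm_power2: "(hs_norm M)^2 = (\<Sum>i\<in>UNIV. \<Sum>j\<in>UNIV. (M$i$j)^2)"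
  unfolding hs_norm_def trace_mult_transpose_self by (simp add: sum_nonneg)

lemma hs_norm_nonneg: "0 \<le> hs_norm M"
  unfolding hs_norm_def trace_mult_transpose_self by (simp add: sum_nonneg)

lemma abs_entry_le_hs_norm: "\<bar>M$i$j\<bar> \<le> hs_norm M"
proof -
  have "(M$i$j)^2 \<le> (\<Sum>j\<in>UNIV. (M$i$j)^2)"
    by (rule member_le_sum) auto
  also have "\<dots> \<le> (\<Sum>i\<in>UNIV. \<Sum>j\<in>UNIV. (M$i$j)^2)"
    by (rule member_le_sum[where f="\<lambda>i. \<Sum>j\<in>UNIV. (M$i$j)^2"]) (auto intro: sum_nonneg)
  finally have "(M$i$j)^2 \<le> (hs_norm M)^2" by (simp add: hs_norm_power2)
  then show ?thesis using hs_norm_nonneg[of M] by (metis abs_le_square_iff abs_of_nonneg)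
qed

lemma Acoef_eq_sum: "Acoef \<sigma> x = (\<Sum>i\<in>UNIV. \<Sum>j\<in>UNIV. (\<sigma> x$i$j)^2) / 2"
  unfolding Acoef_def cmat_def trace_mult_transpose_self ..

lemma Acoef_nonneg: "0 \<le> Acoef \<sigma> x"
  unfolding Acoef_eq_sum by (simp add: sum_nonneg)

lemma inner_cmat_mult_self: "x \<bullet> (cmat \<sigma> x *v x) = (\<Sum>j\<in>UNIV. (\<Sum>i\<in>UNIV. x$i * \<sigma> x$i$j)^2)"
proof -
  have "x \<bullet> (cmat \<sigma> x *v x) = (x v* \<sigma> x) \<bullet> (transpose (\<sigma> x) *v x)"
    unfolding cmat_def by (simp add: matrix_vector_mul_assoc[symmetric] dot_lmul_matrix)
  also have "x v* \<sigma> x = transpose (\<sigma> x) *v x"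
    by (metis transpose_transpose vector_transpose_matrix)
  finally show ?thesis
    unfolding inner_vec_def matrix_vector_mult_def transpose_def
    by (simp add: power2_eq_square mult.commute)
qed

lemma sphere_nonempty: "0 \<le> r \<Longrightarrow> {x::real^'d. norm x = r} \<noteq> {}"
  by (metis (mono_tags) empty_iff mem_Collect_eq norm_axis_1 norm_scaleR abs_of_nonneg mult.right_neutral)

lemma left_neighbourhood_less:
  fixes \<phi> :: "real \<Rightarrow> real"
  assumes "continuous (at t) \<phi>" "c < \<phi> t"
  shows "\<exists>h>0. \<forall>s\<in>{t - h<..t}. c < \<phi> s"
proof -
  have "eventually (\<lambda>s. c < \<phi> s) (at t)"
    using order_tendstoD(1)[OF assms(1)[unfolded continuous_at] assms(2)] .
  then obtain h where "h > 0" "\<And>s. s \<noteq> t \<Longrightarrow> dist s t < h \<Longrightarrow> c < \<phi> s"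
    unfolding eventually_at by auto
  then have "c < \<phi> s" if "t - h < s" "s \<le> t" for s
    using assms(2) that by (cases "s = t") (auto simp: dist_real_def)
  then show ?thesis
    using \<open>h > 0\<close> by auto
qed

lemma sets_borel_if_left_neighbourhoods:
  fixes S :: "real set"
  assumes "\<And>t. t \<in> S \<Longrightarrow> \<exists>h>0. {t - h<..t} \<subseteq> S"
  shows "S \<in> sets borel"
proof -
  obtain h where h: "\<And>t. t \<in> S \<Longrightarrow> h t > 0 \<and> {t - h t<..t} \<subseteq> S"
    using assms by metis
  define T where "T = S - interior S"
  have int: "{t - h t<..<t} \<subseteq> interior S" if "t \<in> S" for t
    using h[OF that] by (intro interior_maximal) auto
  \<comment> \<open>distinct points of \<open>T\<close> have disjoint left neighbourhoods, so \<open>T\<close> injects into \<open>\<rat>\<close>\<close>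
  obtain q where q: "\<And>t. t \<in> T \<Longrightarrow> q t \<in> \<rat> \<and> t - h t < q t \<and> q t < t"
  proof -
    have "\<exists>r. r \<in> \<rat> \<and> t - h t < r \<and> r < t" if "t \<in> T" for t
      using h[of t] that Rats_dense_in_real[of "t - h t" t] unfolding T_def by auto
    then show ?thesis using that by metis
  qed
  have "q t1 \<noteq> q t2" if "t1 \<in> T" "t2 \<in> T" "t1 < t2" for t1 t2
  proof (cases "t1 \<le> t2 - h t2")
    case True
    then show ?thesis using q[OF that(1)] q[OF that(2)] by linarith
  next
    case False
    then have "t1 \<in> {t2 - h t2<..<t2}" using that by auto
    then have "t1 \<in> interior S" using that(2) int[of t2] unfolding T_def by blast
    then show ?thesis using that(1) unfolding T_def by blast
  qed
  then have "inj_on q T"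
    by (metis inj_onI linorder_neqE_linordered_idom)
  moreover have "countable (q ` T)"
    using q countable_rat by (blast intro: countable_subset)
  ultimately have "countable T" by (rule countable_image_inj_on[rotated])
  then have "T \<in> sets borel" by (rule sets.countable[rotated]) auto
  moreover have "S = interior S \<union> T" unfolding T_def using interior_subset by blast
  ultimately show ?thesis by (metis borel_open open_interior sets.Un)
qed

lemma measurable_greaterThan_if_left_lsc:
  fixes f :: "real \<Rightarrow> real"
  assumes lsc: "\<And>t a. r < t \<Longrightarrow> a < f t \<Longrightarrow> \<exists>h>0. \<forall>s\<in>{t - h<..t}. a < f s"
  shows "f \<in> borel_measurable (lebesgue_on {r<..})"
proof -
  define f' where "f' s = (if r < s then f s else 0)" for s
  have "{s. a < f' s} \<in> sets borel" for a
  proof (rule sets_borel_if_left_neighbourhoods)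
    fix t assume "t \<in> {s. a < f' s}"
    then have ta: "a < f' t" by simp
    show "\<exists>h>0. {t - h<..t} \<subseteq> {s. a < f' s}"
    proof (cases "r < t")
      case True
      then have "a < f t" using ta unfolding f'_def by simp
      then obtain h where "h > 0" "\<forall>s\<in>{t - h<..t}. a < f s"
        using lsc[OF True] by blast
      then show ?thesis
        using True by (intro exI[of _ "min h (t - r)"]) (auto simp: f'_def)
    next
      case False
      then show ?thesis using ta by (intro exI[of _ 1]) (auto simp: f'_def)
    qed
  qed
  then have "f' \<in> borel_measurable borel"
    by (auto simp: borel_measurable_iff_greater)
  then have "f' \<in> borel_measurable (lebesgue_on {r<..})"
    by (intro measurable_restrict_space1 measurable_completion) simp
  then show ?thesis
    by (rule measurable_cong[THEN iffD1, rotated]) (simp add: f'_def)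
qed

lemma continuous_on_atLeast_integral:
  fixes f :: "real \<Rightarrow> real"
  assumes "\<And>u. f integrable_on {r..u}"
  shows "continuous_on {r..} (\<lambda>u. integral {r..u} f)"
  unfolding continuous_on_eq_continuous_within
proof
  fix u assume "u \<in> {r..}"
  have "continuous_on {r..u + 1} (\<lambda>u. integral {r..u} f)"
    by (rule indefinite_integral_continuous_1[OF assms])
  then have "continuous (at u within {r..u + 1}) (\<lambda>u. integral {r..u} f)"
    using \<open>u \<in> {r..}\<close> by (simp add: continuous_on_eq_continuous_within)
  moreover have "at u within {r..} = at u within {r..u + 1}"
    by (rule at_within_nhd[of _ "{..<u + 1}"]) auto
  ultimately show "continuous (at u within {r..}) (\<lambda>u. integral {r..u} f)"
    by simp
qed

lemma integrable_exp_neg_integral: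
  fixes f :: "real \<Rightarrow> real"
  assumes "\<And>u. f integrable_on {r..u}"
  shows "(\<lambda>v. exp (- integral {r..v} f)) integrable_on {r..u}"
  using continuous_on_subset[OF continuous_on_atLeast_integral[OF assms], of "{r..u}"]
  by (intro integrable_continuous_interval continuous_intros) auto

lemma integral_le_neg_powr:
  fixes f :: "real \<Rightarrow> real"
  assumes "0 < r" "0 < p" "r \<le> u" "f integrable_on {r..u}"
    and "\<And>s. s \<in> {r..u} \<Longrightarrow> f s \<le> - K * s powr (p - 1)"
  shows "integral {r..u} f \<le> - (K / p) * (u powr p - r powr p)"
proof -
  have "((\<lambda>s. K / p * s powr p) has_vector_derivative K * s powr (p - 1)) (at s within {r..u})"
    if "s \<in> {r..u}" for s
    using that assms(1,2)
    by (auto intro!: derivative_eq_intros simp flip: has_real_derivative_iff_has_vector_derivative)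
  then have "((\<lambda>s. K * s powr (p - 1)) has_integral (K / p * u powr p - K / p * r powr p)) {r..u}"
    by (rule fundamental_theorem_of_calculus[OF assms(3)])
  then have "((\<lambda>s. - (K * s powr (p - 1))) has_integral - (K / p * u powr p - K / p * r powr p)) {r..u}"
    by (rule has_integral_neg)
  then have "integral {r..u} f \<le> - (K / p * u powr p - K / p * r powr p)"
    by (rule has_integral_le[OF integrable_integral[OF assms(4)]]) (use assms(5) in auto)
  then show ?thesis by (simp add: algebra_simps)
qed

lemma stretched_exp_decay_le_inverse_square:
  fixes a c p \<alpha> :: real
  assumes "0 < a" "0 < c" "0 < p"
  obtains M where "\<And>u. a \<le> u \<Longrightarrow> (u - a + 1) powr \<alpha> * exp (- (c * (u powr p - a powr p))) \<le> M * u powr -2"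
proof -
  define H where "H u = (u - a + 1) powr \<alpha> * exp (- (c * (u powr p - a powr p)))" for u
  have "((\<lambda>u. u powr 2 * H u) \<longlongrightarrow> 0) at_top"
    unfolding H_def using assms by real_asymp
  then have "eventually (\<lambda>u. u powr 2 * H u < 1) at_top"
    by (rule order_tendstoD(2)) simp
  then obtain N where N: "\<And>u. N \<le> u \<Longrightarrow> u powr 2 * H u < 1"
    unfolding eventually_at_top_linorder by auto
  have cont: "continuous_on {a..max a N} (\<lambda>u. u powr 2 * H u)"
    unfolding H_def using assms by (intro continuous_intros) auto
  obtain x where x: "\<And>y. y \<in> {a..max a N} \<Longrightarrow> y powr 2 * H y \<le> x powr 2 * H x"
    using continuous_attains_sup[OF compact_Icc _ cont] by blast
  have bound: "u powr 2 * H u \<le> max 1 (x powr 2 * H x)" if "a \<le> u" for u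
  proof (cases "u \<le> max a N")
    case True
    then show ?thesis using x[of u] that by simp
  next
    case False
    then have "N \<le> u" by simp
    then show ?thesis using N[of u] max.cobounded1[of 1 "x powr 2 * H x"] by linarith
  qed
  have "H u \<le> max 1 (x powr 2 * H x) * u powr -2" if "a \<le> u" for u
  proof -
    have "0 < u powr 2" using that assms(1) by simp
    then have "H u \<le> max 1 (x powr 2 * H x) / u powr 2"
      using bound[OF that] by (simp add: field_simps)
    then show ?thesis by (simp add: powr_minus divide_inverse)
  qed
  then show ?thesis using that unfolding H_def by blast
qed

lemma powr_add_one_mult_exp_le:
  fixes J d I \<alpha> :: real
  assumes "0 \<le> \<alpha>" "0 \<le> J" "0 \<le> d" "I \<le> 0" "J \<le> d * exp (- I)"
  shows "(J + 1) powr \<alpha> * exp I \<le> (d + 1) powr \<alpha> * exp ((1 - \<alpha>) * I)"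
proof -
  have "1 \<le> exp (- I)" using assms(4) by simp
  moreover have "(d + 1) * exp (- I) = d * exp (- I) + exp (- I)"
    by (simp add: algebra_simps)
  ultimately have "J + 1 \<le> (d + 1) * exp (- I)"
    using assms(5) by linarith
  then have "(J + 1) powr \<alpha> \<le> ((d + 1) * exp (- I)) powr \<alpha>"
    using assms(1,2) by (intro powr_mono2) auto
  also have "\<dots> = (d + 1) powr \<alpha> * exp (- (\<alpha> * I))"
    by (simp add: powr_mult exp_powr_real mult.commute)
  finally have "(J + 1) powr \<alpha> * exp I \<le> (d + 1) powr \<alpha> * exp (- (\<alpha> * I)) * exp I"
    by (simp add: mult_right_mono)
  also have "\<dots> = (d + 1) powr \<alpha> * exp ((1 - \<alpha>) * I)"
    by (simp add: algebra_simps flip: exp_add)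
  finally show ?thesis .
qed

lemma integral_antimono_if_nonpos:
  fixes f :: "real \<Rightarrow> real"
  assumes "f integrable_on {r..u}" "r \<le> v" "v \<le> u" "\<And>s. s \<in> {v..u} \<Longrightarrow> f s \<le> 0"
  shows "integral {r..u} f \<le> integral {r..v} f"
proof -
  have "f integrable_on {v..u}"
    by (rule integrable_on_subinterval[OF assms(1)]) (use assms(2) in auto)
  then have "integral {v..u} f \<le> integral {v..u} (\<lambda>_. 0)"
    by (rule integral_le) (use assms(4) in auto)
  moreover have "integral {r..v} f + integral {v..u} f = integral {r..u} f"
    by (rule Henstock_Kurzweil_Integration.integral_combine[OF assms(2,3,1)])
  ultimately show ?thesis by simp
qed

lemma integral_exp_neg_integral_le:
  fixes f :: "real \<Rightarrow> real"
  assumes f_int: "\<And>u. f integrable_on {r..u}" and f_nonpos: "\<And>s. r \<le> s \<Longrightarrow> f s \<le> 0" and "r \<le> u"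
  shows "integral {r..u} (\<lambda>v. exp (- integral {r..v} f)) \<le> (u - r) * exp (- integral {r..u} f)"
proof -
  have "integral {r..u} f \<le> integral {r..v} f" if "v \<in> {r..u}" for v
    using that f_nonpos by (intro integral_antimono_if_nonpos[OF f_int]) auto
  then have "integral {r..u} (\<lambda>v. exp (- integral {r..v} f)) \<le> integral {r..u} (\<lambda>_. exp (- integral {r..u} f))"
    by (intro integral_le integrable_exp_neg_integral[OF f_int]) auto
  then show ?thesis using \<open>r \<le> u\<close> by simp
qed

lemma exp_integral_weight_le_inverse_square:
  fixes f :: "real \<Rightarrow> real"
  assumes r: "0 < r" and K: "0 < K" and p: "0 < p" and \<alpha>: "0 < \<alpha>" "\<alpha> < 1"
    and f_int: "\<And>u. f integrable_on {r..u}"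
    and f_le: "\<And>s. r \<le> s \<Longrightarrow> f s \<le> - K * s powr (p - 1)"
  obtains M where "\<And>u. r \<le> u \<Longrightarrow>
    (integral {r..u} (\<lambda>v. exp (- integral {r..v} f)) + 1) powr \<alpha> * exp (integral {r..u} f) \<le> M * u powr -2"
proof -
  define I where "I u = integral {r..u} f" for u
  define J where "J u = integral {r..u} (\<lambda>v. exp (- I v))" for u
  have f_nonpos: "f s \<le> 0" if "r \<le> s" for s
  proof -
    have "0 \<le> K * s powr (p - 1)" using K by simp
    then show ?thesis using f_le[OF that] by linarith
  qed
  define c where "c = (1 - \<alpha>) * (K / p)"
  have c: "0 < c" unfolding c_def using \<alpha> K p by simp
  obtain M where M: "\<And>u. r \<le> u \<Longrightarrow> (u - r + 1) powr \<alpha> * exp (- (c * (u powr p - r powr p))) \<le> M * u powr -2"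
    using stretched_exp_decay_le_inverse_square[OF r c p] by blast
  have "(J u + 1) powr \<alpha> * exp (I u) \<le> M * u powr -2" if u: "r \<le> u" for u
  proof -
    have "I u \<le> - (K / p) * (u powr p - r powr p)"
      unfolding I_def by (rule integral_le_neg_powr[OF r p u f_int], rule f_le) simp
    then have "(1 - \<alpha>) * I u \<le> (1 - \<alpha>) * (- (K / p) * (u powr p - r powr p))"
      by (rule mult_left_mono) (use \<alpha> in simp)
    then have decay: "exp ((1 - \<alpha>) * I u) \<le> exp (- (c * (u powr p - r powr p)))"
      by (simp add: c_def)
    have "I u \<le> I r"
      unfolding I_def using f_nonpos u by (intro integral_antimono_if_nonpos[OF f_int]) auto
    moreover have "J u \<le> (u - r) * exp (- I u)"
      unfolding J_def I_def by (rule integral_exp_neg_integral_le[OF f_int f_nonpos u])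
    moreover have "0 \<le> J u"
      unfolding J_def I_def by (rule integral_nonneg[OF integrable_exp_neg_integral[OF f_int]]) simp
    ultimately have "(J u + 1) powr \<alpha> * exp (I u) \<le> (u - r + 1) powr \<alpha> * exp ((1 - \<alpha>) * I u)"
      using \<alpha> u by (intro powr_add_one_mult_exp_le) (auto simp: I_def)
    also have "\<dots> \<le> (u - r + 1) powr \<alpha> * exp (- (c * (u powr p - r powr p)))"
      using decay by (rule mult_left_mono) simp
    also have "\<dots> \<le> M * u powr -2" by (rule M[OF u])
    finally show ?thesis .
  qed
  then show ?thesis using that unfolding I_def J_def by blast
qed

lemma integrable_exp_integral_weight:
  fixes f g :: "real \<Rightarrow> real"
  assumes r: "0 < r" and K: "0 < K" and p: "0 < p" and \<alpha>: "0 < \<alpha>" "\<alpha> < 1" and \<Delta>: "0 < \<Delta>"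
    and f_int: "\<And>u. f integrable_on {r..u}"
    and f_le: "\<And>s. r \<le> s \<Longrightarrow> f s \<le> - K * s powr (p - 1)"
    and g_meas: "g \<in> borel_measurable (lebesgue_on {r..})"
    and g_ge: "\<And>s. r \<le> s \<Longrightarrow> 1 / \<Delta> \<le> g s"
  shows "(\<lambda>u. (integral {r..u} (\<lambda>v. exp (- integral {r..v} f)) + 1) powr \<alpha>
             * exp (integral {r..u} f) / g u) integrable_on {r..}"
proof -
  define I where "I u = integral {r..u} f" for u
  define J where "J u = integral {r..u} (\<lambda>v. exp (- I v))" for u
  define F where "F u = (J u + 1) powr \<alpha> * exp (I u) / g u" for u
  obtain M where M: "\<And>u. r \<le> u \<Longrightarrow> (J u + 1) powr \<alpha> * exp (I u) \<le> M * u powr -2"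
    using exp_integral_weight_le_inverse_square[OF r K p \<alpha> f_int f_le] unfolding I_def J_def by blast
  have F_bound: "\<bar>F u\<bar> \<le> \<Delta> * M * u powr -2" if u: "r \<le> u" for u
  proof -
    have "0 < 1 / \<Delta>" using \<Delta> by simp
    then have g_pos: "0 < g u" using g_ge[OF u] by linarith
    then have g_inv: "1 / g u \<le> \<Delta>"
      using g_ge[OF u] \<Delta> by (simp add: divide_le_eq field_simps)
    have "0 \<le> (J u + 1) powr \<alpha> * exp (I u)" by simp
    then have "(J u + 1) powr \<alpha> * exp (I u) * (1 / g u) \<le> M * u powr -2 * \<Delta>"
      using g_pos by (intro mult_mono[OF M[OF u] g_inv] order_trans[OF _ M[OF u]]) auto
    then show ?thesis using g_pos by (simp add: F_def mult_ac)
  qed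
  have "continuous_on {r..} I"
    unfolding I_def by (rule continuous_on_atLeast_integral[OF f_int])
  moreover have "continuous_on {r..} J"
    unfolding J_def I_def by (intro continuous_on_atLeast_integral integrable_exp_neg_integral f_int)
  moreover have "J u + 1 \<noteq> 0" for u
  proof -
    have "0 \<le> J u"
      unfolding J_def I_def by (rule integral_nonneg[OF integrable_exp_neg_integral[OF f_int]]) simp
    then show ?thesis by linarith
  qed
  ultimately have "continuous_on {r..} (\<lambda>u. (J u + 1) powr \<alpha> * exp (I u))"
    by (intro continuous_intros) auto
  then have "(\<lambda>u. (J u + 1) powr \<alpha> * exp (I u)) \<in> borel_measurable (lebesgue_on {r..})"
    by (rule continuous_imp_measurable_on_sets_lebesgue) simp
  then have F_meas: "F \<in> borel_measurable (lebesgue_on {r..})"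
    unfolding F_def by (rule borel_measurable_divide[OF _ g_meas])
  have "(\<lambda>u. u powr -2) integrable_on {r..}"
    using has_integral_powr_to_inf[of "-2" r] r unfolding integrable_on_def by auto
  from integrable_on_cmult_left[OF this, of "\<Delta> * M"]
  have "(\<lambda>u. \<Delta> * M * u powr -2) integrable_on {r..}" by simp
  then have "F integrable_on {r..}"
    by (rule measurable_bounded_by_integrable_imp_integrable_real[OF F_meas]) (auto intro: F_bound)
  then show ?thesis unfolding F_def J_def I_def .
qed

locale regular_coefficients =
  fixes b :: "real^'d \<Rightarrow> real^'d" and \<sigma> :: "real^'d \<Rightarrow> real^'n^'d"
  assumes locally_bounded: "\<forall>r>0. \<exists>M. \<forall>x. norm x < r \<longrightarrow> norm (b x) + hs_norm (\<sigma> x) \<le> M"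
    and locally_monotone: "\<forall>r>0. \<exists>\<Gamma>r>0. \<forall>x y. norm x < r \<longrightarrow> norm y < r \<longrightarrow>
          2 * ((x - y) \<bullet> (b x - b y)) + (hs_norm (\<sigma> x - \<sigma> y))^2 \<le> \<Gamma>r * (norm (x - y))^2"
begin

lemma continuous_sigma_entry: "continuous (at x0) (\<lambda>y. \<sigma> y $ i $ j)"
proof -
  define r where "r = norm x0 + 1"
  have r: "r > 0" "norm x0 < r" unfolding r_def by (simp_all add: add_nonneg_pos)
  obtain M where "\<And>x. norm x < r \<Longrightarrow> norm (b x) + hs_norm (\<sigma> x) \<le> M"
    using locally_bounded r by blast
  then have M: "norm (b x) \<le> M" if "norm x < r" for x
    using that hs_norm_nonneg[of "\<sigma> x"] by fastforce
  obtain G where G: "\<And>x y. norm x < r \<Longrightarrow> norm y < r \<Longrightarrow>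
       2 * ((x - y) \<bullet> (b x - b y)) + (hs_norm (\<sigma> x - \<sigma> y))^2 \<le> G * (norm (x - y))^2"
    using locally_monotone r by blast
  define \<omega> where "\<omega> y = sqrt (G * (norm (y - x0))^2 + 4 * M * norm (y - x0))" for y
  \<comment> \<open>\<open>b\<close> is bounded near \<open>x0\<close>, so (C2) bounds \<open>hs_norm (\<sigma> y - \<sigma> x0)\<close> by \<open>\<omega> y\<close>\<close>
  have bound: "norm (\<sigma> y $ i $ j - \<sigma> x0 $ i $ j) \<le> \<omega> y" if "dist y x0 < 1" for y
  proof -
    have y: "norm y < r"
      using that norm_triangle_ineq[of "y - x0" x0] unfolding r_def dist_norm by simp
    have "norm (b y - b x0) \<le> 2 * M"
      using M[OF y] M[OF r(2)] norm_triangle_ineq4[of "b y" "b x0"] by linarith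
    then have "norm (y - x0) * norm (b y - b x0) \<le> norm (y - x0) * (2 * M)"
      by (rule mult_left_mono) simp
    then have "\<bar>(y - x0) \<bullet> (b y - b x0)\<bar> \<le> 2 * M * norm (y - x0)"
      using Cauchy_Schwarz_ineq2[of "y - x0" "b y - b x0"] by (simp add: mult.commute)
    then have "(hs_norm (\<sigma> y - \<sigma> x0))^2 \<le> G * (norm (y - x0))^2 + 4 * M * norm (y - x0)"
      using G[OF y r(2)] unfolding abs_le_iff by linarith
    then have "hs_norm (\<sigma> y - \<sigma> x0) \<le> \<omega> y"
      unfolding \<omega>_def using hs_norm_nonneg real_le_rsqrt by blast
    then show ?thesis
      using abs_entry_le_hs_norm[of "\<sigma> y - \<sigma> x0" i j] by simp
  qed
  have "(\<omega> \<longlongrightarrow> \<omega> x0) (at x0)"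
    unfolding \<omega>_def by (intro tendsto_intros tendsto_ident_at)
  then have "(\<omega> \<longlongrightarrow> 0) (at x0)"
    by (simp add: \<omega>_def)
  moreover have "eventually (\<lambda>y. norm (\<sigma> y $ i $ j - \<sigma> x0 $ i $ j) \<le> \<omega> y) (at x0)"
    unfolding eventually_at by (rule exI[of _ 1]) (use bound in auto)
  ultimately have "((\<lambda>y. \<sigma> y $ i $ j - \<sigma> x0 $ i $ j) \<longlongrightarrow> 0) (at x0)"
    by (rule Lim_null_comparison[rotated])
  then show ?thesis unfolding continuous_at by (simp add: LIM_zero_iff)
qed

lemma continuous_Acoef: "continuous (at x) (Acoef \<sigma>)"
proof -
  have "Acoef \<sigma> = (\<lambda>x. (\<Sum>i\<in>UNIV. \<Sum>j\<in>UNIV. (\<sigma> x$i$j)^2) / 2)"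
    by (rule ext) (rule Acoef_eq_sum)
  then show ?thesis
    by (simp add: continuous_sigma_entry continuous_intros)
qed

lemma continuous_C0: "x \<noteq> 0 \<Longrightarrow> continuous (at x) (C0 \<sigma>)"
proof -
  assume "x \<noteq> 0"
  have "C0 \<sigma> = (\<lambda>x. (\<Sum>j\<in>UNIV. (\<Sum>i\<in>UNIV. x$i * \<sigma> x$i$j)^2) / (norm x)^2)"
    by (rule ext) (simp add: C0_def inner_cmat_mult_self)
  then show ?thesis
    using \<open>x \<noteq> 0\<close> by (simp add: continuous_sigma_entry continuous_intros)
qed

lemma continuous_along_ray:
  assumes "u \<noteq> 0" "0 < t"
  shows "continuous (at t) (\<lambda>s. Acoef \<sigma> (s *\<^sub>R u))" "continuous (at t) (\<lambda>s. C0 \<sigma> (s *\<^sub>R u))"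
proof -
  have ray: "continuous (at t) (\<lambda>s. s *\<^sub>R u)" by (intro continuous_intros)
  show "continuous (at t) (\<lambda>s. Acoef \<sigma> (s *\<^sub>R u))"
    using continuous_at_compose[OF ray continuous_Acoef] by (simp add: o_def)
  show "continuous (at t) (\<lambda>s. C0 \<sigma> (s *\<^sub>R u))"
    using continuous_at_compose[OF ray continuous_C0] assms by (simp add: o_def)
qed

lemma radial_drift_one_sided_lipschitz:
  assumes "norm u = 1" "0 \<le> t"
  obtains G where "\<And>s. 0 \<le> s \<Longrightarrow> s \<le> t \<Longrightarrow> u \<bullet> b (t *\<^sub>R u) - G / 2 * (t - s) \<le> u \<bullet> b (s *\<^sub>R u)"
proof -
  obtain G where G: "\<And>x y. norm x < t + 1 \<Longrightarrow> norm y < t + 1 \<Longrightarrow>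
       2 * ((x - y) \<bullet> (b x - b y)) + (hs_norm (\<sigma> x - \<sigma> y))^2 \<le> G * (norm (x - y))^2"
    using locally_monotone \<open>0 \<le> t\<close> by (meson add_nonneg_pos zero_less_one)
  have "u \<bullet> b (t *\<^sub>R u) - G / 2 * (t - s) \<le> u \<bullet> b (s *\<^sub>R u)" if s: "0 \<le> s" "s < t" for s
  proof -
    have "t *\<^sub>R u - s *\<^sub>R u = (t - s) *\<^sub>R u" by (simp add: scaleR_diff_left)
    moreover have "norm (t *\<^sub>R u) < t + 1" "norm (s *\<^sub>R u) < t + 1"
      using assms s by auto
    ultimately have "2 * ((t - s) * (u \<bullet> (b (t *\<^sub>R u) - b (s *\<^sub>R u)))) + (hs_norm (\<sigma> (t *\<^sub>R u) - \<sigma> (s *\<^sub>R u)))^2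
        \<le> G * (t - s)^2"
      using G[of "t *\<^sub>R u" "s *\<^sub>R u"] assms(1) s by simp
    then have "2 * ((t - s) * (u \<bullet> (b (t *\<^sub>R u) - b (s *\<^sub>R u)))) \<le> G * (t - s)^2"
      using zero_le_power2[of "hs_norm (\<sigma> (t *\<^sub>R u) - \<sigma> (s *\<^sub>R u))"] by linarith
    then have "(t - s) * (2 * (u \<bullet> (b (t *\<^sub>R u) - b (s *\<^sub>R u)))) \<le> (t - s) * (G * (t - s))"
      by (simp add: power2_eq_square algebra_simps)
    then have "2 * (u \<bullet> (b (t *\<^sub>R u) - b (s *\<^sub>R u))) \<le> G * (t - s)"
      using s by simp
    then show ?thesis by (simp add: inner_diff_right field_simps)
  qed
  then show ?thesis
    by (intro that) (fastforce simp: order_le_less)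
qed

end

definition iota_ratio :: "(real^'d \<Rightarrow> real^'d) \<Rightarrow> (real^'d \<Rightarrow> real^'n^'d) \<Rightarrow> real^'d \<Rightarrow> real" where
  "iota_ratio b \<sigma> x = (2 * Acoef \<sigma> x - C0 \<sigma> x + 2 * B0 b x) / C0 \<sigma> x"

lemma iota0_eq_SUP: "iota0 b \<sigma> r = (SUP x\<in>{x. norm x = r}. iota_ratio b \<sigma> x)"
  unfolding iota0_def iota_ratio_def ..

locale dissipative_coefficients = regular_coefficients b \<sigma>
  for b :: "real^'d \<Rightarrow> real^'d" and \<sigma> :: "real^'d \<Rightarrow> real^'n^'d" +
  fixes \<alpha> \<gamma> \<Gamma> r0 \<Delta> :: real
  assumes alpha: "0 < \<alpha>" "\<alpha> < 1"
    and gamma: "0 < \<gamma>" "\<gamma> < 2 / (1 - \<alpha>)"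
    and Gamma: "0 < \<Gamma>"
    and r0: "0 \<le> r0"
    and drift: "\<And>x. x \<noteq> 0 \<Longrightarrow> norm x \<ge> r0 \<Longrightarrow>
        Acoef \<sigma> x - (1 - \<gamma> / 2) * C0 \<sigma> x + B0 b x \<le> - \<Gamma> * norm x powr (\<gamma> * \<alpha> - \<gamma> + 2)"
    and Delta: "1 \<le> \<Delta>"
    and ellipt: "\<And>x. x \<noteq> 0 \<Longrightarrow> norm x \<ge> r0 \<Longrightarrow> 1 / \<Delta> \<le> C0 \<sigma> x \<and> C0 \<sigma> x \<le> \<Delta>"
begin

abbreviation decay_exponent :: real where
  "decay_exponent \<equiv> \<gamma> * \<alpha> - \<gamma> + 2"

lemma decay_exponent_pos: "0 < decay_exponent"
proof -
  have "\<gamma> * (1 - \<alpha>) < 2" using gamma alpha by (simp add: field_simps)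
  then show ?thesis by (simp add: algebra_simps)
qed

lemma C0_pos: "x \<noteq> 0 \<Longrightarrow> r0 \<le> norm x \<Longrightarrow> 0 < C0 \<sigma> x"
  using ellipt[of x] Delta by (smt (verit) divide_pos_pos)

lemma iota_ratio_le:
  assumes x: "x \<noteq> 0" "r0 \<le> norm x"
  shows "iota_ratio b \<sigma> x \<le> (1 - \<gamma>) - 2 * \<Gamma> * norm x powr decay_exponent / \<Delta>"
proof -
  let ?C = "C0 \<sigma> x" and ?n = "norm x powr decay_exponent"
  have C: "0 < ?C" "?C \<le> \<Delta>" using C0_pos[OF x] ellipt[OF x] by auto
  have "2 * Acoef \<sigma> x - ?C + 2 * B0 b x \<le> (1 - \<gamma>) * ?C - 2 * \<Gamma> * ?n"
    using drift[OF x] by (simp add: algebra_simps)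
  then have "iota_ratio b \<sigma> x \<le> ((1 - \<gamma>) * ?C - 2 * \<Gamma> * ?n) / ?C"
    unfolding iota_ratio_def using C by (simp add: divide_right_mono)
  also have "\<dots> = (1 - \<gamma>) - 2 * \<Gamma> * ?n / ?C" using C by (simp add: field_simps)
  also have "\<dots> \<le> (1 - \<gamma>) - 2 * \<Gamma> * ?n / \<Delta>"
    using C Gamma by (simp add: divide_left_mono)
  finally show ?thesis .
qed

lemma bdd_above_iota_ratio_sphere: "0 < r \<Longrightarrow> r0 \<le> r \<Longrightarrow> bdd_above (iota_ratio b \<sigma> ` {x. norm x = r})"
  by (rule bdd_aboveI[of _ "1 - \<gamma>"])
    (use Gamma Delta in \<open>fastforce intro!: order.trans[OF iota_ratio_le]\<close>)

lemma iota_ratio_le_iota0: "0 < r \<Longrightarrow> r0 \<le> r \<Longrightarrow> norm x = r \<Longrightarrow> iota_ratio b \<sigma> x \<le> iota0 b \<sigma> r"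
  unfolding iota0_eq_SUP by (rule cSUP_upper[OF _ bdd_above_iota_ratio_sphere]) auto

lemma iota0_le:
  assumes "0 < r" "r0 \<le> r"
  shows "iota0 b \<sigma> r \<le> (1 - \<gamma>) - 2 * \<Gamma> * r powr decay_exponent / \<Delta>"
  unfolding iota0_eq_SUP using assms
  by (intro cSUP_least sphere_nonempty) (auto intro!: order.trans[OF iota_ratio_le])

lemma bdd_below_C0_sphere: "0 < r \<Longrightarrow> r0 \<le> r \<Longrightarrow> bdd_below (C0 \<sigma> ` {x. norm x = r})"
  by (rule bdd_belowI[of _ "1 / \<Delta>"]) (use ellipt in force)

lemma gamma0_le_C0: "0 < r \<Longrightarrow> r0 \<le> r \<Longrightarrow> norm x = r \<Longrightarrow> gamma0 \<sigma> r \<le> C0 \<sigma> x"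
  unfolding gamma0_def by (rule cINF_lower[OF bdd_below_C0_sphere]) auto

lemma gamma0_ge:
  assumes "0 < r" "r0 \<le> r"
  shows "1 / \<Delta> \<le> gamma0 \<sigma> r"
  unfolding gamma0_def using assms
  by (intro cINF_greatest sphere_nonempty) (use ellipt in force)+


lemma iota0_bounded_below:
  obtains L where "\<And>r. 0 < r \<Longrightarrow> r0 \<le> r \<Longrightarrow> r \<le> R \<Longrightarrow> L \<le> iota0 b \<sigma> r"
proof -
  define R' where "R' = max R 0 + 1"
  have R': "R' > 0" unfolding R'_def by linarith
  obtain M where "\<And>x. norm x < R' \<Longrightarrow> norm (b x) + hs_norm (\<sigma> x) \<le> M"
    using locally_bounded R' by blast
  then have M: "norm (b x) \<le> M" if "norm x < R'" for x
    using that hs_norm_nonneg[of "\<sigma> x"] by fastforce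
  have M0: "0 \<le> M" using M[of 0] R' by (simp add: order_trans[OF norm_ge_zero])
  have "-1 - 2 * (R' * M * \<Delta>) \<le> iota0 b \<sigma> r" if r: "0 < r" "r0 \<le> r" "r \<le> R" for r
  proof -
    define e :: "real^'d" where "e = r *\<^sub>R axis undefined 1"
    have ne: "norm e = r" and e0: "e \<noteq> 0" and eR: "norm e < R'"
      using r unfolding e_def R'_def by auto
    have C: "0 < C0 \<sigma> e" "1 / C0 \<sigma> e \<le> \<Delta>"
      using ellipt[OF e0] C0_pos[OF e0] ne r Delta by (auto simp: divide_le_eq field_simps)
    have "\<bar>B0 b e\<bar> \<le> norm e * norm (b e)" unfolding B0_def by (rule Cauchy_Schwarz_ineq2)
    also have "\<dots> \<le> R' * M" using M[OF eR] eR M0 R' by (intro mult_mono) auto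
    finally have B: "- (R' * M) \<le> B0 b e" by linarith
    have "- (R' * M) * \<Delta> \<le> - (R' * M) * (1 / C0 \<sigma> e)"
      using C R' M0 by (intro mult_left_mono_neg) auto
    also have "\<dots> \<le> B0 b e * (1 / C0 \<sigma> e)"
      using B C by (intro mult_right_mono) auto
    finally have "- (R' * M * \<Delta>) \<le> B0 b e * (1 / C0 \<sigma> e)" by simp
    moreover have "iota_ratio b \<sigma> e = 2 * (Acoef \<sigma> e / C0 \<sigma> e) - 1 + 2 * (B0 b e * (1 / C0 \<sigma> e))"
      unfolding iota_ratio_def using C by (simp add: field_simps)
    moreover have "0 \<le> Acoef \<sigma> e / C0 \<sigma> e" using C Acoef_nonneg[of \<sigma> e] by simp
    ultimately have "-1 - 2 * (R' * M * \<Delta>) \<le> iota_ratio b \<sigma> e" by linarith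
    also have "\<dots> \<le> iota0 b \<sigma> r" by (rule iota_ratio_le_iota0[OF r(1,2) ne])
    finally show ?thesis .
  qed
  then show ?thesis using that by blast
qed


lemma iota0_left_lsc:
  assumes t: "r0 < t" and c: "c < iota0 b \<sigma> t"
  shows "\<exists>h>0. \<forall>s\<in>{t - h<..t}. c < iota0 b \<sigma> s"
proof -
  have "0 < t" using t r0 by linarith
  obtain x where x: "norm x = t" "c < iota_ratio b \<sigma> x"
    using c less_cSUP_iff[OF sphere_nonempty bdd_above_iota_ratio_sphere, of t] \<open>0 < t\<close> t
    unfolding iota0_eq_SUP by auto
  define u where "u = x /\<^sub>R t"
  have u: "norm u = 1" "t *\<^sub>R u = x" "u \<noteq> 0"
    using x \<open>0 < t\<close> by (auto simp: u_def)
  obtain G where G: "\<And>s. 0 \<le> s \<Longrightarrow> s \<le> t \<Longrightarrow> u \<bullet> b x - G / 2 * (t - s) \<le> u \<bullet> b (s *\<^sub>R u)"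
    using radial_drift_one_sided_lipschitz[OF u(1) less_imp_le[OF \<open>0 < t\<close>]] unfolding u(2) by blast
  \<comment> \<open>a lower bound for \<open>iota_ratio\<close> along the ray through \<open>x\<close> that is continuous at \<open>t\<close>\<close>
  define \<phi> where "\<phi> s = (2 * Acoef \<sigma> (s *\<^sub>R u) - C0 \<sigma> (s *\<^sub>R u) + 2 * s * (u \<bullet> b x - G / 2 * (t - s)))
      / C0 \<sigma> (s *\<^sub>R u)" for s
  have "0 < C0 \<sigma> x" using C0_pos[of x] x t \<open>0 < t\<close> by auto
  then have "continuous (at t) \<phi>"
    unfolding \<phi>_def using continuous_along_ray[OF u(3) \<open>0 < t\<close>] u(2)
    by (intro continuous_intros) auto
  moreover have "\<phi> t = iota_ratio b \<sigma> x"
  proof -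
    have "B0 b x = t * (u \<bullet> b x)" unfolding B0_def by (metis u(2) inner_scaleR_left)
    then show ?thesis unfolding \<phi>_def iota_ratio_def u(2) by simp
  qed
  ultimately obtain h where h: "h > 0" "\<forall>s\<in>{t - h<..t}. c < \<phi> s"
    using left_neighbourhood_less x(2) by metis
  have \<phi>_le: "\<phi> s \<le> iota0 b \<sigma> s" if s: "r0 < s" "s \<le> t" for s
  proof -
    have ns: "norm (s *\<^sub>R u) = s" and "0 < s" using u s r0 by auto
    then have "0 < C0 \<sigma> (s *\<^sub>R u)" using C0_pos[of "s *\<^sub>R u"] s u(3) by auto
    moreover have "2 * s * (u \<bullet> b x - G / 2 * (t - s)) \<le> 2 * B0 b (s *\<^sub>R u)"
      unfolding B0_def using G[of s] s \<open>0 < s\<close> by (simp add: mult_left_mono)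
    ultimately have "\<phi> s \<le> iota_ratio b \<sigma> (s *\<^sub>R u)"
      unfolding \<phi>_def iota_ratio_def by (intro divide_right_mono) auto
    also have "\<dots> \<le> iota0 b \<sigma> s" using iota_ratio_le_iota0[OF \<open>0 < s\<close> _ ns] s by simp
    finally show ?thesis .
  qed
  have "c < iota0 b \<sigma> s" if "s \<in> {t - min h (t - r0)<..t}" for s
  proof -
    have "r0 < s" "s \<in> {t - h<..t}" using that by auto
    then show ?thesis using h(2) \<phi>_le[of s] by fastforce
  qed
  then show ?thesis
    using h(1) t by (intro exI[of _ "min h (t - r0)"]) auto
qed

lemma gamma0_left_usc:
  assumes t: "r0 < t" and c: "gamma0 \<sigma> t < c"
  shows "\<exists>h>0. \<forall>s\<in>{t - h<..t}. gamma0 \<sigma> s < c"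
proof -
  have "0 < t" using t r0 by linarith
  obtain x where x: "norm x = t" "C0 \<sigma> x < c"
    using c cINF_less_iff[OF sphere_nonempty bdd_below_C0_sphere, of t] \<open>0 < t\<close> t
    unfolding gamma0_def by auto
  define u where "u = x /\<^sub>R t"
  have u: "t *\<^sub>R u = x" "u \<noteq> 0" "norm u = 1"
    using x \<open>0 < t\<close> by (auto simp: u_def)
  have "continuous (at t) (\<lambda>s. - C0 \<sigma> (s *\<^sub>R u))"
    using continuous_along_ray(2)[OF u(2) \<open>0 < t\<close>] by (intro continuous_intros)
  moreover have "- c < - C0 \<sigma> (t *\<^sub>R u)" using x(2) u(1) by simp
  ultimately obtain h where h: "h > 0" "\<forall>s\<in>{t - h<..t}. - c < - C0 \<sigma> (s *\<^sub>R u)"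
    by (blast dest: left_neighbourhood_less)
  have "gamma0 \<sigma> s < c" if "s \<in> {t - min h (t - r0)<..t}" for s
  proof -
    have "r0 < s" "s \<in> {t - h<..t}" using that by auto
    then show ?thesis using h(2) gamma0_le_C0[of s "s *\<^sub>R u"] r0 u(3) by fastforce
  qed
  then show ?thesis
    using h(1) t by (intro exI[of _ "min h (t - r0)"]) auto
qed

lemma iota0_measurable: "iota0 b \<sigma> \<in> borel_measurable (lebesgue_on {r0<..})"
  by (rule measurable_greaterThan_if_left_lsc) (rule iota0_left_lsc)

lemma gamma0_measurable: "gamma0 \<sigma> \<in> borel_measurable (lebesgue_on {r0<..})"
proof -
  have "(\<lambda>s. - gamma0 \<sigma> s) \<in> borel_measurable (lebesgue_on {r0<..})"
  proof (rule measurable_greaterThan_if_left_lsc)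
    fix t a assume "r0 < t" "a < - gamma0 \<sigma> t"
    then obtain h where "h > 0" "\<forall>s\<in>{t - h<..t}. gamma0 \<sigma> s < - a"
      using gamma0_left_usc[of t "- a"] by auto
    then show "\<exists>h>0. \<forall>s\<in>{t - h<..t}. a < - gamma0 \<sigma> s" by force
  qed
  then show ?thesis by simp
qed


lemma iota0_div_integrable:
  assumes "r0 < r"
  shows "(\<lambda>s. iota0 b \<sigma> s / s) integrable_on {r..R}"
proof -
  have r: "0 < r" using assms r0 by linarith
  obtain L where L: "\<And>s. 0 < s \<Longrightarrow> r0 \<le> s \<Longrightarrow> s \<le> R \<Longrightarrow> L \<le> iota0 b \<sigma> s"
    using iota0_bounded_below by blast
  have "iota0 b \<sigma> \<in> borel_measurable (lebesgue_on {r..R})"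
    using assms by (intro measurable_restrict_mono[OF iota0_measurable]) auto
  moreover have "(\<lambda>s. s) \<in> borel_measurable (lebesgue_on {r..R})"
    by (intro continuous_imp_measurable_on_sets_lebesgue continuous_on_id) simp
  ultimately have meas: "(\<lambda>s. iota0 b \<sigma> s / s) \<in> borel_measurable (lebesgue_on {r..R})"
    by (rule borel_measurable_divide)
  have "\<bar>iota0 b \<sigma> s / s\<bar> \<le> (\<bar>L\<bar> + \<bar>1 - \<gamma>\<bar>) / r" if s: "s \<in> {r..R}" for s
  proof -
    have s0: "0 < s" "r0 \<le> s" "s \<le> R" using s r assms by auto
    have "0 \<le> 2 * \<Gamma> * s powr decay_exponent / \<Delta>" using Gamma Delta by simp
    then have "iota0 b \<sigma> s \<le> 1 - \<gamma>" using iota0_le[OF s0(1,2)] by linarith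
    then have "\<bar>iota0 b \<sigma> s\<bar> \<le> \<bar>L\<bar> + \<bar>1 - \<gamma>\<bar>" using L[OF s0] by linarith
    then have "\<bar>iota0 b \<sigma> s\<bar> / s \<le> (\<bar>L\<bar> + \<bar>1 - \<gamma>\<bar>) / r"
      using s r by (intro frac_le) auto
    then show ?thesis using s0 by simp
  qed
  then show ?thesis
    by (intro measurable_bounded_by_integrable_imp_integrable_real[OF meas] integrable_const_ivl) auto
qed

lemma iota0_div_le_neg_powr:
  obtains r' where "r0 < r'" "0 < r'"
    and "\<And>s. r' \<le> s \<Longrightarrow> iota0 b \<sigma> s / s \<le> - (\<Gamma> / \<Delta>) * s powr (decay_exponent - 1)"
proof -
  define K where "K = \<Gamma> / \<Delta>"
  have K: "0 < K" using Gamma Delta unfolding K_def by simp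
  define r' where "r' = max (r0 + 1) ((\<bar>1 - \<gamma>\<bar> / K) powr (1 / decay_exponent))"
  have r': "r0 < r'" "0 < r'" unfolding r'_def using r0 by auto
  have "iota0 b \<sigma> s / s \<le> - K * s powr (decay_exponent - 1)" if s: "r' \<le> s" for s
  proof -
    have s0: "0 < s" "r0 \<le> s" using s r' by auto
    have "(\<bar>1 - \<gamma>\<bar> / K) powr (1 / decay_exponent) \<le> s" using s unfolding r'_def by simp
    then have "((\<bar>1 - \<gamma>\<bar> / K) powr (1 / decay_exponent)) powr decay_exponent \<le> s powr decay_exponent"
      using decay_exponent_pos by (intro powr_mono2) auto
    then have "\<bar>1 - \<gamma>\<bar> / K \<le> s powr decay_exponent"
      using decay_exponent_pos K by (simp add: powr_powr)
    then have "1 - \<gamma> \<le> K * s powr decay_exponent"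
      using K by (simp add: divide_le_eq mult.commute)
    then have "iota0 b \<sigma> s \<le> - K * s powr decay_exponent"
      using iota0_le[OF s0] unfolding K_def by simp
    then have "iota0 b \<sigma> s / s \<le> (- K * s powr decay_exponent) / s"
      using s0 by (intro divide_right_mono) auto
    moreover have "s powr (decay_exponent - 1) = s powr decay_exponent / s"
      using s0 by (subst powr_diff) simp
    ultimately show ?thesis by simp
  qed
  then show ?thesis using that r' unfolding K_def by blast
qed

end

theorem proposition2p5:
  fixes b :: "real^'d \<Rightarrow> real^'d"
    and \<sigma> :: "real^'d \<Rightarrow> real^'n^'d"
    and \<alpha> \<gamma> \<Gamma> r0 \<Delta> :: real
  assumes b_meas: "b \<in> borel_measurable borel"
    and \<sigma>_meas: "\<sigma> \<in> borel_measurable borel"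
    and C1: "\<forall>r>0. \<exists>M. \<forall>x. norm x < r \<longrightarrow> norm (b x) + hs_norm (\<sigma> x) \<le> M"
    and C2: "\<forall>r>0. \<exists>\<Gamma>r>0. \<forall>x y. norm x < r \<longrightarrow> norm y < r \<longrightarrow>
               2 * ((x - y) \<bullet> (b x - b y)) + (hs_norm (\<sigma> x - \<sigma> y))^2 \<le> \<Gamma>r * (norm (x - y))^2"
    and C3: "\<exists>\<Gamma>3>0. \<forall>x. 2 * (x \<bullet> b x) + (hs_norm (\<sigma> x))^2 \<le> \<Gamma>3 * (1 + (norm x)^2)"
    and alpha: "0 < \<alpha>" "\<alpha> < 1"
    and gamma: "0 < \<gamma>" "\<gamma> < 2 / (1 - \<alpha>)"
    and Gamma: "0 < \<Gamma>"
    and r0: "0 \<le> r0"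
    and drift: "\<And>x. x \<noteq> 0 \<Longrightarrow> norm x \<ge> r0 \<Longrightarrow>
        Acoef \<sigma> x - (1 - \<gamma> / 2) * C0 \<sigma> x + B0 b x \<le> - \<Gamma> * norm x powr (\<gamma> * \<alpha> - \<gamma> + 2)"
    and Delta: "1 \<le> \<Delta>"
    and ellipt: "\<And>x. x \<noteq> 0 \<Longrightarrow> norm x \<ge> r0 \<Longrightarrow> 1 / \<Delta> \<le> C0 \<sigma> x \<and> C0 \<sigma> x \<le> \<Delta>"
  shows "\<exists>r'\<ge>r0.
     let I0 = (\<lambda>r. integral {r'..r} (\<lambda>s. iota0 b \<sigma> s / s)) in
       (\<forall>r\<ge>r'. (\<lambda>s. iota0 b \<sigma> s / s) integrable_on {r'..r}) \<and>
       (\<forall>u\<ge>r'. (\<lambda>v. exp (- I0 v)) integrable_on {r'..u}) \<and>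
       (\<lambda>u. (integral {r'..u} (\<lambda>v. exp (- I0 v)) + 1) powr \<alpha> * exp (I0 u) / gamma0 \<sigma> u)
          integrable_on {r'..}"
proof -
  interpret dissipative_coefficients b \<sigma> \<alpha> \<gamma> \<Gamma> r0 \<Delta>
    by unfold_locales (use C1 C2 alpha gamma Gamma r0 drift Delta ellipt in auto)
  obtain r' where r': "r0 < r'" "0 < r'"
    and iota0_bound: "\<And>s. r' \<le> s \<Longrightarrow> iota0 b \<sigma> s / s \<le> - (\<Gamma> / \<Delta>) * s powr (decay_exponent - 1)"
    using iota0_div_le_neg_powr by blast
  have iota0_int: "\<And>u. (\<lambda>s. iota0 b \<sigma> s / s) integrable_on {r'..u}"
    by (rule iota0_div_integrable[OF r'(1)])
  have "gamma0 \<sigma> \<in> borel_measurable (lebesgue_on {r'..})"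
    using r'(1) by (intro measurable_restrict_mono[OF gamma0_measurable]) auto
  then have "(\<lambda>u. (integral {r'..u} (\<lambda>v. exp (- integral {r'..v} (\<lambda>s. iota0 b \<sigma> s / s))) + 1) powr \<alpha>
      * exp (integral {r'..u} (\<lambda>s. iota0 b \<sigma> s / s)) / gamma0 \<sigma> u) integrable_on {r'..}"
    using r' Gamma Delta alpha decay_exponent_pos gamma0_ge
    by (intro integrable_exp_integral_weight[where \<Delta> = \<Delta>, OF r'(2) _ _ _ _ _ iota0_int iota0_bound]) auto
  moreover have "\<And>u. (\<lambda>v. exp (- integral {r'..v} (\<lambda>s. iota0 b \<sigma> s / s))) integrable_on {r'..u}"
    by (rule integrable_exp_neg_integral[OF iota0_int])
  ultimately show ?thesis
    using r'(1) iota0_int unfolding Let_def by (intro exI[of _ r']) auto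
qed

end
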